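(* Under the assumptions below, let $\overline{y}\in[H_Y,Y]_s$ for some $s\in[0,1]$, let $\varrho=h^{2\alpha}$, let $y_{\varrho h}\in Y_h$ be the Galerkin solution, let $\widetilde{u}_{\varrho h}\in U_h$ be the unique solution of $\langle\widetilde{u}_{\varrho h},x_h\rangle_{X^*,X}=\langle By_{\varrho h},x_h\rangle_{X^*,X}$ for all $x_h\in X_h$, and let $\widetilde{y}_\varrho:=B^{-1}\widetilde{u}_{\varrho h}$. Then $$\|\widetilde{y}_\varrho-\overline{y}\|_{H_Y}\le c\,h^{\alpha s}\|\overline{y}\|_{[H_Y,Y]_s}$$ with a constant $c$ independent of $h$ and $\overline{y}$.
   Context: Abstract setting: Let $X\subset H_X\subset X^*$ and $Y\subset H_Y\subset Y^*$ be Gelfand triples of real Hilbert spaces, where the duality pairings $\langle\cdot,\cdot\rangle_{X^*,X}$ and $\langle\cdot,\cdot\rangle_{Y^*,Y}$ extend the inner products of $H_X$, $H_Y$. Let $B:Y\to X^*$ be a bounded linear isomorphism with adjoint $B^*:X\to Y^*$, $\langle By,x\rangle_{X^*,X}=\langle y,B^*x\rangle_{Y,Y^*}$. Let $D:Y\to Y^*$ be bounded, linear, self-adjoint and elliptic, $\|y\|_D:=\langle Dy,y\rangle_{Y^*,Y}^{1/2}$ (an equivalent norm on $Y$). Given $\overline{y}\in H_Y$ and $\varrho>0$, $y_\varrho\in Y$ is the unique solution of $\langle y_\varrho,y\rangle_{H_Y}+\varrho\langle Dy_\varrho,y\rangle_{Y^*,Y}=\langle\overline{y},y\rangle_{H_Y}$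 for all $y\in Y$. Discretization: for each $h\in(0,h_0]$, $Y_h\subset Y$ is finite-dimensional and there are maps $P_h:Y\to Y_h$, $\alpha>0$ and $c_1,c_2>0$ independent of $h$ with $\|y-P_hy\|_{H_Y}\le c_1h^\alpha\|y\|_D$ and $\|y-P_hy\|_D\le c_2\|y\|_D$ for all $y\in Y$; $y_{\varrho h}\in Y_h$ satisfies $\langle y_{\varrho h},y_h\rangle_{H_Y}+\varrho\langle Dy_{\varrho h},y_h\rangle_{Y^*,Y}=\langle\overline{y},y_h\rangle_{H_Y}$ for all $y_h\in Y_h$. Further, $U_h\subset X^*$ and $X_h\subset X$ are finite-dimensional subspaces with $\dim U_h=\dim X_h$, satisfying the discrete inf-sup condition $c_S\|u_h\|_{X^*}\le\sup_{0\ne x_h\in X_h}\langle u_h,x_h\rangle_{X^*,X}/\|x_h\|_X$ for all $u_h\in U_h$ with $c_S>0$ independent of $h$, and there are maps $\Pi_h:X\to X_h$ with $\|x-\Pi_hx\|_X\le c\,h^\alpha\|B^*x\|_{H_Y}$ for all $x\in X$ with $B^*x\in H_Y$, $c$ independent of $h$. $[H_Y,Y]_s$, $s\in[0,1]$, denotes the interpolation space between $H_Y$ and $Y$ (with $Y$ normed by $\|\cdot\|_D$) obtained by an exact interpolation method of exponent $s$ (e.g. the real $K$-method), with $[H_Y,Y]_0=H_Y$ and $[H_Y,Y]_1=Y$. *)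

theory Defs
  imports "HOL-Analysis.Analysis"
begin

text \<open>Energy norm induced by the bilinear form d(y,z) = <D y, z>.\<close>
definition Dnorm :: "('y \<Rightarrow> 'y \<Rightarrow> real) \<Rightarrow> 'y \<Rightarrow> real" where
  "Dnorm d y = sqrt (d y y)"

definition Kfun :: "('y::real_normed_vector) set \<Rightarrow> ('y \<Rightarrow> real) \<Rightarrow> real \<Rightarrow> 'y \<Rightarrow> real" where
  "Kfun Y nY t y = Inf {norm y0 + t * nY y1 | y0 y1. y1 \<in> Y \<and> y = y0 + y1}"

definition interp_integral :: "real \<Rightarrow> ('y::real_normed_vector) set \<Rightarrow> ('y \<Rightarrow> real) \<Rightarrow> 'y \<Rightarrow> ennreal" where
  "interp_integral s Y nY y =
     (\<integral>\<^sup>+ t \<in> {0<..}. ennreal ((t powr (- s) * Kfun Y nY t y)\<^sup>2 / t) \<partial>lborel)"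

text \<open>Interpolation space [H,Y]_s, with the conventions [H,Y]_0 = H, [H,Y]_1 = Y.\<close>
definition interp_space :: "real \<Rightarrow> ('y::real_normed_vector) set \<Rightarrow> ('y \<Rightarrow> real) \<Rightarrow> 'y set" where
  "interp_space s Y nY =
     (if s = 0 then UNIV else if s = 1 then Y else {y. interp_integral s Y nY y < \<infinity>})"

definition interp_norm :: "real \<Rightarrow> ('y::real_normed_vector) set \<Rightarrow> ('y \<Rightarrow> real) \<Rightarrow> 'y \<Rightarrow> real" where
  "interp_norm s Y nY y =
     (if s = 0 then norm y else if s = 1 then nY y
      else sqrt (enn2real (interp_integral s Y nY y)))"

end

(* Split ybar = y0 + y1 with y1 in Y arbitrarily. Testing the regularized Galerkin
   equation with y_rh - P_h y1 gives, with t = h^alpha and rho = t^2,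
     |y_rh - ybar| + t |y_rh|_D <= C (|y0| + t |y1|_D).
   The reconstruction ytilde = B^-1 u_h is compared with y_rh by duality: if B^* x = ytilde - y_rh,
   then |ytilde - y_rh|^2 = <u_h - B y_rh, x - Pi_h x>, because u_h - B y_rh vanishes on X_h; the
   approximation property of Pi_h and the inf-sup stability of u_h turn this into
   |ytilde - y_rh| <= C t |y_rh|_D. Taking the infimum over all splittings bounds the error by the
   K-functional K(t, ybar), and monotonicity of K in t bounds K(t, ybar) by 3 t^s |ybar|_s. *)

theory Submission
  imports Defs
begin

section \<open>Riesz representation\<close>

lemma quadratic_nonneg_imp_discriminant_le:
  fixes A B C :: real
  assumes nonneg: "\<And>t. 0 \<le> A + 2 * t * B + t\<^sup>2 * C" and "0 \<le> C"
  shows "B\<^sup>2 \<le> A * C"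
proof (cases "C = 0")
  case True
  have "B = 0"
  proof (rule ccontr)
    assume "B \<noteq> 0"
    then have "A + 2 * (- (A + 1) / (2 * B)) * B + (- (A + 1) / (2 * B))\<^sup>2 * C = -1"
      using True by (simp add: field_simps)
    with nonneg show False by (metis neg_0_le_iff_le not_one_le_zero)
  qed
  with True show ?thesis by simp
next
  case False
  with \<open>0 \<le> C\<close> have "C > 0" by simp
  have "A + 2 * (- B / C) * B + (- B / C)\<^sup>2 * C = A - B\<^sup>2 / C"
    using \<open>C > 0\<close> by (simp add: field_simps power2_eq_square)
  with nonneg[of "- B / C"] have "B\<^sup>2 / C \<le> A" by simp
  with \<open>C > 0\<close> show ?thesis by (simp add: divide_le_eq mult.commute)
qed

lemma parallelogram_law:
  fixes a b :: "'a::real_inner"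
  shows "(norm (a + b))\<^sup>2 + (norm (a - b))\<^sup>2 = 2 * (norm a)\<^sup>2 + 2 * (norm b)\<^sup>2"
  by (simp add: power2_norm_eq_inner inner_add inner_diff inner_commute)

lemma quadratic_functional_has_minimizer:
  fixes f :: "'a::{real_inner,complete_space} \<Rightarrow> real"
  assumes "bounded_linear f"
  shows "\<exists>z. \<forall>y. (norm z)\<^sup>2 - 2 * f z \<le> (norm y)\<^sup>2 - 2 * f y"
proof -
  interpret f: bounded_linear f by fact
  define J where "J x = (norm x)\<^sup>2 - 2 * f x" for x
  obtain K where K: "\<And>x. norm (f x) \<le> norm x * K" using f.bounded by blast
  have "- K\<^sup>2 \<le> J x" for x
  proof -
    have "f x \<le> norm x * K" using K[of x] by simp
    moreover have "0 \<le> (norm x - K)\<^sup>2" by simp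
    ultimately show ?thesis unfolding J_def by (simp add: power2_eq_square algebra_simps)
  qed
  then have bdd: "bdd_below (range J)" by (intro bdd_belowI2)
  define m where "m = Inf (range J)"
  have m_le: "m \<le> J x" for x unfolding m_def using bdd by (simp add: cINF_lower)
  have "\<exists>x. J x < m + 1 / Suc n" for n
    using cINF_less_iff[OF UNIV_not_empty bdd, of "m + 1 / Suc n"] by (simp add: m_def)
  then obtain xs where xs: "\<And>n. J (xs n) < m + 1 / Suc n" by metis
  have midpoint: "(norm (a - b))\<^sup>2 = 2 * J a + 2 * J b - 4 * J ((1/2) *\<^sub>R (a + b))" for a b
  proof -
    have "4 * (norm ((1/2) *\<^sub>R (a + b)))\<^sup>2 = (norm (a + b))\<^sup>2"
      by (simp only: norm_scaleR) (simp add: power_mult_distrib power2_eq_square)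
    then show ?thesis
      using parallelogram_law[of a b] by (simp add: J_def f.add f.scaleR algebra_simps)
  qed
  have "Cauchy xs"
  proof (rule metric_CauchyI)
    fix e :: real assume "e > 0"
    then obtain N where N: "1 / Suc N < e\<^sup>2 / 4"
      by (metis divide_pos_pos inverse_eq_divide reals_Archimedean zero_less_numeral zero_less_power)
    have "dist (xs p) (xs q) < e" if "N \<le> p" "N \<le> q" for p q
    proof -
      have "1 / Suc p \<le> 1 / Suc N" "1 / Suc q \<le> 1 / Suc N"
        using that by (simp_all add: frac_le)
      with midpoint[of "xs p" "xs q"] xs[of p] xs[of q] m_le[of "(1/2) *\<^sub>R (xs p + xs q)"] N
      have "(norm (xs p - xs q))\<^sup>2 < e\<^sup>2" by linarith
      with \<open>e > 0\<close> show ?thesis by (simp add: dist_norm power_less_imp_less_base)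
    qed
    then show "\<exists>M. \<forall>p\<ge>M. \<forall>q\<ge>M. dist (xs p) (xs q) < e" by blast
  qed
  then obtain z where z: "xs \<longlonglongrightarrow> z" using Cauchy_convergent_iff convergent_def by blast
  have "(\<lambda>n. J (xs n)) \<longlonglongrightarrow> J z"
    unfolding J_def by (intro tendsto_intros f.tendsto z)
  moreover have "(\<lambda>n. m + 1 / Suc n) \<longlonglongrightarrow> m"
    using tendsto_add[OF tendsto_const LIMSEQ_inverse_real_of_nat] by (simp add: inverse_eq_divide)
  ultimately have "J z \<le> m"
    using xs by (intro LIMSEQ_le) (auto intro: less_imp_le)
  with m_le show ?thesis unfolding J_def by (meson order_trans)
qed

lemma riesz_representation:
  fixes f :: "'a::{real_inner,complete_space} \<Rightarrow> real"
  assumes "bounded_linear f"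
  obtains z where "\<And>x. f x = inner z x"
proof -
  interpret f: bounded_linear f by fact
  obtain z where min: "\<And>y. (norm z)\<^sup>2 - 2 * f z \<le> (norm y)\<^sup>2 - 2 * f y"
    using quadratic_functional_has_minimizer[OF assms] by blast
  have "f v = inner z v" for v
  proof -
    have "0 \<le> 0 + 2 * t * (inner z v - f v) + t\<^sup>2 * (norm v)\<^sup>2" for t
    proof -
      have "(norm (z + t *\<^sub>R v))\<^sup>2 = (norm z)\<^sup>2 + 2 * t * inner z v + t\<^sup>2 * (norm v)\<^sup>2"
        unfolding power2_norm_eq_inner by (simp add: inner_add inner_commute power2_eq_square)
      with min[of "z + t *\<^sub>R v"] show ?thesis by (simp add: f.add f.scaleR algebra_simps)
    qed
    then have "(inner z v - f v)\<^sup>2 \<le> 0"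
      using quadratic_nonneg_imp_discriminant_le by fastforce
    then show ?thesis by simp
  qed
  then show thesis by (rule that)
qed

section \<open>Energy forms and the regularized Galerkin problem\<close>

locale energy_form =
  fixes Y :: "'y::real_vector set" and d :: "'y \<Rightarrow> 'y \<Rightarrow> real"
  assumes subspace_Y: "subspace Y"
    and add_left: "\<And>a b z. a \<in> Y \<Longrightarrow> b \<in> Y \<Longrightarrow> z \<in> Y \<Longrightarrow> d (a + b) z = d a z + d b z"
    and scale_left: "\<And>r a z. a \<in> Y \<Longrightarrow> z \<in> Y \<Longrightarrow> d (r *\<^sub>R a) z = r * d a z"
    and symmetric: "\<And>a z. a \<in> Y \<Longrightarrow> z \<in> Y \<Longrightarrow> d a z = d z a"
    and positive: "\<And>a. a \<in> Y \<Longrightarrow> a \<noteq> 0 \<Longrightarrow> d a a > 0"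
begin

lemma zero_in: "0 \<in> Y"
  using subspace_Y by (rule subspace_0)

lemma diff_in: "a \<in> Y \<Longrightarrow> b \<in> Y \<Longrightarrow> a - b \<in> Y"
  using subspace_Y by (rule subspace_diff)

lemma add_in: "a \<in> Y \<Longrightarrow> b \<in> Y \<Longrightarrow> a + b \<in> Y"
  using subspace_Y by (rule subspace_add)

lemma scale_in: "a \<in> Y \<Longrightarrow> r *\<^sub>R a \<in> Y"
  using subspace_Y by (rule subspace_scale)

lemma add_right: "a \<in> Y \<Longrightarrow> b \<in> Y \<Longrightarrow> z \<in> Y \<Longrightarrow> d z (a + b) = d z a + d z b"
  using symmetric[of z "a + b"] symmetric[of z a] symmetric[of z b] add_left[of a b z]
  by (simp add: add_in)

lemma scale_right: "a \<in> Y \<Longrightarrow> z \<in> Y \<Longrightarrow> d z (r *\<^sub>R a) = r * d z a"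
  using symmetric[of z "r *\<^sub>R a"] symmetric[of z a] scale_left[of a z r]
  by (simp add: scale_in)

lemma diff_right: "a \<in> Y \<Longrightarrow> b \<in> Y \<Longrightarrow> z \<in> Y \<Longrightarrow> d z (a - b) = d z a - d z b"
  using add_right[of a "(-1) *\<^sub>R b" z] scale_right[of b z "-1"] scale_in[of b "-1"] by simp

lemma zero_left: "z \<in> Y \<Longrightarrow> d 0 z = 0"
  using scale_left[of z z 0] by simp

lemma nonneg: "a \<in> Y \<Longrightarrow> 0 \<le> d a a"
  using positive[of a] zero_left[OF zero_in] by (cases "a = 0") (auto intro: less_imp_le)

lemma Dnorm_nonneg: "a \<in> Y \<Longrightarrow> 0 \<le> Dnorm d a"
  by (simp add: Dnorm_def nonneg)

lemma Dnorm_square: "a \<in> Y \<Longrightarrow> (Dnorm d a)\<^sup>2 = d a a"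
  by (simp add: Dnorm_def nonneg)

lemma Dnorm_zero: "Dnorm d 0 = 0"
  by (simp add: Dnorm_def zero_left zero_in)

lemma expand_square:
  assumes "a \<in> Y" "b \<in> Y"
  shows "d (a + t *\<^sub>R b) (a + t *\<^sub>R b) = d a a + 2 * t * d a b + t\<^sup>2 * d b b"
proof -
  have "d (a + t *\<^sub>R b) (a + t *\<^sub>R b) = d a (a + t *\<^sub>R b) + t * d b (a + t *\<^sub>R b)"
    using assms by (simp add: add_left scale_left add_in scale_in)
  also have "\<dots> = d a a + t * d a b + t * (d b a + t * d b b)"
    using assms by (simp add: add_right scale_right scale_in)
  finally show ?thesis
    using symmetric[OF assms] by (simp add: power2_eq_square algebra_simps)
qed

lemma cauchy_schwarz:
  assumes "a \<in> Y" "b \<in> Y"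
  shows "\<bar>d a b\<bar> \<le> Dnorm d a * Dnorm d b"
proof -
  have "0 \<le> d a a + 2 * t * d a b + t\<^sup>2 * d b b" for t
    using nonneg[OF add_in[OF assms(1) scale_in[OF assms(2)]]] by (simp add: expand_square assms)
  then have "(d a b)\<^sup>2 \<le> d a a * d b b"
    using nonneg[OF assms(2)] by (rule quadratic_nonneg_imp_discriminant_le)
  then have "\<bar>d a b\<bar>\<^sup>2 \<le> (Dnorm d a * Dnorm d b)\<^sup>2"
    using assms by (simp add: power_mult_distrib Dnorm_square)
  then show ?thesis
    by (rule power2_le_imp_le) (simp_all add: assms Dnorm_nonneg)
qed

lemma form_le_if_close:
  assumes "a \<in> Y" "b \<in> Y" "c \<in> Y" "Dnorm d (b - c) \<le> k * Dnorm d b"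
  shows "d a c \<le> Dnorm d a * ((1 + k) * Dnorm d b)"
proof -
  have "d a c = d a b - d a (b - c)"
    using assms by (simp add: diff_right)
  also have "\<dots> \<le> Dnorm d a * Dnorm d b + Dnorm d a * Dnorm d (b - c)"
    using cauchy_schwarz[of a b] cauchy_schwarz[of a "b - c"] assms diff_in by (simp add: abs_le_iff)
  also have "\<dots> \<le> Dnorm d a * ((1 + k) * Dnorm d b)"
    using mult_left_mono[OF assms(4) Dnorm_nonneg[OF assms(1)]] by (simp add: algebra_simps)
  finally show ?thesis .
qed

end

lemma sum_le_twice_if_sum_squares_le:
  fixes a b L :: real
  assumes "0 \<le> a" "0 \<le> b" "0 \<le> L" "a\<^sup>2 + b\<^sup>2 \<le> L * (a + b)"
  shows "a + b \<le> 2 * L"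
proof (cases "a + b = 0")
  case False
  have "(a + b) * (a + b) \<le> 2 * (a\<^sup>2 + b\<^sup>2)"
    using sum_squares_bound[of a b] by (simp add: power2_eq_square algebra_simps)
  also have "\<dots> \<le> (2 * L) * (a + b)" using assms by simp
  finally show ?thesis using False assms by (simp add: mult_le_cancel_right add_nonneg_eq_0_iff)
qed (use assms in simp)

lemma galerkin_energy_identity:
  fixes ybar yr p :: "'y::real_inner"
  assumes "energy_form Y d" and V: "subspace V" "V \<subseteq> Y"
    and yr: "yr \<in> V" "\<And>z. z \<in> V \<Longrightarrow> inner yr z + \<rho> * d yr z = inner ybar z"
    and "p \<in> V"
  shows "(norm (yr - ybar))\<^sup>2 + \<rho> * (Dnorm d yr)\<^sup>2 = inner (yr - ybar) (p - ybar) + \<rho> * d yr p"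
proof -
  interpret energy_form Y d by fact
  have "yr \<in> Y" "p \<in> Y" using yr(1) \<open>p \<in> V\<close> V(2) by auto
  have "inner (yr - ybar) (yr - p) + \<rho> * d yr (yr - p) = 0"
    using yr(2)[OF subspace_diff[OF V(1) yr(1) \<open>p \<in> V\<close>]] by (simp add: inner_diff_left)
  moreover have "inner (yr - ybar) (yr - p) = (norm (yr - ybar))\<^sup>2 - inner (yr - ybar) (p - ybar)"
    using inner_diff_right[of "yr - ybar" "yr - ybar" "p - ybar"] by (simp add: power2_norm_eq_inner)
  moreover have "d yr (yr - p) = (Dnorm d yr)\<^sup>2 - d yr p"
    using \<open>yr \<in> Y\<close> \<open>p \<in> Y\<close> by (simp add: diff_right Dnorm_square)
  ultimately show ?thesis
    by (simp add: right_diff_distrib)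
qed

lemma regularized_galerkin_error:
  fixes ybar y0 y1 yr :: "'y::real_inner"
  assumes "energy_form Y d" and V: "subspace V" "V \<subseteq> Y" and "0 < t" "0 \<le> c1" "0 \<le> c2"
    and yr: "yr \<in> V" "\<And>z. z \<in> V \<Longrightarrow> inner yr z + t\<^sup>2 * d yr z = inner ybar z"
    and P: "\<And>y. y \<in> Y \<Longrightarrow> P y \<in> V" "\<And>y. y \<in> Y \<Longrightarrow> norm (y - P y) \<le> c1 * t * Dnorm d y"
      "\<And>y. y \<in> Y \<Longrightarrow> Dnorm d (y - P y) \<le> c2 * Dnorm d y"
    and dec: "y1 \<in> Y" "ybar = y0 + y1"
  shows "norm (yr - ybar) + t * Dnorm d yr \<le> 2 * (1 + c1 + c2) * (norm y0 + t * Dnorm d y1)"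
proof -
  interpret energy_form Y d by fact
  define p where "p = P y1"
  have p: "p \<in> V" "norm (y1 - p) \<le> c1 * t * Dnorm d y1" "Dnorm d (y1 - p) \<le> c2 * Dnorm d y1"
    using P dec(1) by (simp_all add: p_def)
  define a D N K M where "a = norm (yr - ybar)" and "D = Dnorm d yr"
    and "N = Dnorm d y1" and "K = 1 + c1 + c2" and "M = norm y0 + t * N"
  have in_Y: "yr \<in> Y" "p \<in> Y" using yr(1) p(1) V(2) by auto
  have nonneg: "0 \<le> a" "0 \<le> D" "0 \<le> N" "0 \<le> M"
    using in_Y dec \<open>0 < t\<close> Dnorm_nonneg by (simp_all add: a_def D_def N_def M_def)
  have "norm y0 + c1 * t * N \<le> K * M" "(1 + c2) * (t * N) \<le> K * M"
    using nonneg \<open>0 < t\<close> \<open>0 \<le> c1\<close> \<open>0 \<le> c2\<close>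
    by (simp_all add: K_def M_def algebra_simps mult_right_mono add_increasing)
  have "inner (yr - ybar) (p - ybar) \<le> a * norm (p - ybar)"
    using Cauchy_Schwarz_ineq2[of "yr - ybar" "p - ybar"] by (simp add: a_def abs_le_iff)
  also have "\<dots> = a * norm (y0 + (y1 - p))"
    using dec(2) by (metis add_diff_eq norm_minus_commute)
  also have "\<dots> \<le> a * (K * M)"
    using norm_triangle_ineq[of y0 "y1 - p"] p(2) \<open>norm y0 + c1 * t * N \<le> K * M\<close> nonneg
    by (intro mult_left_mono) (simp_all add: N_def)
  finally have data_term: "inner (yr - ybar) (p - ybar) \<le> a * (K * M)" .
  have "t\<^sup>2 * d yr p \<le> t\<^sup>2 * (D * ((1 + c2) * N))"
    using form_le_if_close[of yr y1 p c2] in_Y dec(1) p(3)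
    by (intro mult_left_mono) (simp_all add: D_def N_def)
  also have "\<dots> = (t * D) * ((1 + c2) * (t * N))"
    by (simp add: power2_eq_square ac_simps)
  also have "\<dots> \<le> (t * D) * (K * M)"
    using \<open>(1 + c2) * (t * N) \<le> K * M\<close> nonneg \<open>0 < t\<close> by (intro mult_left_mono) simp_all
  finally have "a\<^sup>2 + (t * D)\<^sup>2 \<le> (K * M) * (a + t * D)"
    using galerkin_energy_identity[OF assms(1) V yr p(1)] data_term
    by (simp add: a_def D_def power_mult_distrib algebra_simps)
  then have "a + t * D \<le> 2 * (K * M)"
    using nonneg \<open>0 < t\<close> \<open>0 \<le> c1\<close> \<open>0 \<le> c2\<close>
    by (intro sum_le_twice_if_sum_squares_le) (simp_all add: K_def)
  then show ?thesis unfolding a_def D_def K_def M_def N_def by (simp only: mult.assoc)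
qed

lemma galerkin_perturbation_error:
  fixes ybar y0 y1 yr yt :: "'y::real_inner"
  assumes "energy_form Y d" and V: "subspace V" "V \<subseteq> Y" and "0 < t" "0 \<le> c1" "0 \<le> c2"
    and yr: "yr \<in> V" "\<And>z. z \<in> V \<Longrightarrow> inner yr z + t\<^sup>2 * d yr z = inner ybar z"
    and P: "\<And>y. y \<in> Y \<Longrightarrow> P y \<in> V" "\<And>y. y \<in> Y \<Longrightarrow> norm (y - P y) \<le> c1 * t * Dnorm d y"
      "\<And>y. y \<in> Y \<Longrightarrow> Dnorm d (y - P y) \<le> c2 * Dnorm d y"
    and yt: "norm (yt - yr) \<le> C * (t * Dnorm d yr)" "0 \<le> C"
    and dec: "y1 \<in> Y" "ybar = y0 + y1"
  shows "norm (yt - ybar) \<le> (C + 1) * (2 * (1 + c1 + c2)) * (norm y0 + t * Dnorm d y1)"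
proof -
  have "0 \<le> Dnorm d yr"
    using energy_form.Dnorm_nonneg[OF assms(1)] yr(1) V(2) by blast
  have "norm (yt - ybar) \<le> C * (t * Dnorm d yr) + norm (yr - ybar)"
    using norm_triangle_ineq[of "yt - yr" "yr - ybar"] yt(1) by simp
  also have "\<dots> \<le> (C + 1) * (norm (yr - ybar) + t * Dnorm d yr)"
    using \<open>0 \<le> C\<close> \<open>0 < t\<close> \<open>0 \<le> Dnorm d yr\<close> by (simp add: algebra_simps)
  also have "\<dots> \<le> (C + 1) * (2 * (1 + c1 + c2)) * (norm y0 + t * Dnorm d y1)"
    using regularized_galerkin_error[OF assms(1-11) dec] \<open>0 \<le> C\<close>
    by (simp add: mult.assoc mult_left_mono)
  finally show ?thesis .
qed

section \<open>Petrov--Galerkin reconstruction\<close>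

lemma dim_eq_0_if_subset_zero:
  fixes X :: "'a::real_vector set"
  assumes "X \<subseteq> {0}"
  shows "dim X = 0"
proof -
  obtain B where B: "B \<subseteq> X" "independent B" "card B = dim X"
    by (meson real_vector.basis_exists)
  have "0 \<notin> B"
    using B(2) real_vector.dependent_zero by blast
  then have "B = {}"
    using B(1) assms by blast
  with B(3) show ?thesis by simp
qed

lemma subset_zero_if_dim_eq_0:
  fixes U :: "'a::real_vector set"
  assumes "finite A" "span A = U" "dim U = 0"
  shows "U \<subseteq> {0}"
proof -
  obtain B where B: "B \<subseteq> U" "independent B" "U \<subseteq> span B" "card B = dim U"
    by (meson real_vector.basis_exists)
  have "finite B"
    using real_vector.independent_span_bound[OF assms(1) B(2)] B(1) assms(2) by blast
  with B(3,4) assms(3) show ?thesis by simp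
qed

lemma ex_nonzero_if_dim_eq:
  fixes U :: "'a::real_vector set" and X :: "'b::real_vector set"
  assumes "finite A" "span A = U" "dim U = dim X" "u \<in> U" "u \<noteq> 0"
  shows "X - {0} \<noteq> {}"
proof
  assume "X - {0} = {}"
  then have "dim X = 0"
    by (intro dim_eq_0_if_subset_zero) blast
  then have "U \<subseteq> {0}"
    using assms(3) by (intro subset_zero_if_dim_eq_0[OF assms(1,2)]) simp
  with assms(4,5) show False by blast
qed

lemma inf_sup_norm_le:
  fixes u g :: "'x::real_normed_vector \<Rightarrow>\<^sub>L real"
  assumes inf_sup: "cS * norm u \<le> (SUP x \<in> X - {0}. u x / norm x)"
    and "X - {0} \<noteq> {}" and agree: "\<And>x. x \<in> X \<Longrightarrow> u x = g x"
  shows "cS * norm u \<le> norm g"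
proof -
  have "(SUP x \<in> X - {0}. u x / norm x) \<le> norm g"
  proof (rule cSUP_least[OF \<open>X - {0} \<noteq> {}\<close>])
    fix x assume "x \<in> X - {0}"
    then have "u x \<le> norm g * norm x"
      using agree norm_blinfun[of g x] by simp
    with \<open>x \<in> X - {0}\<close> show "u x / norm x \<le> norm g"
      by (simp add: divide_le_eq)
  qed
  with inf_sup show ?thesis by linarith
qed

lemma norm_le_by_orthogonal_residual:
  fixes r :: "'x::real_normed_vector \<Rightarrow>\<^sub>L real" and v :: "'y::real_inner"
  assumes "r x = inner v v" "xh \<in> X" "\<And>x'. x' \<in> X \<Longrightarrow> r x' = 0"
    and approx: "norm (x - xh) \<le> K * norm v" and "0 \<le> K"
  shows "norm v \<le> K * norm r"
proof -
  have "norm v * norm v = r (x - xh)"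
    using assms(1-3) by (simp add: blinfun.diff_right power2_norm_eq_inner[symmetric] power2_eq_square)
  also have "\<dots> \<le> norm r * norm (x - xh)"
    using norm_blinfun[of r "x - xh"] by simp
  also have "\<dots> \<le> norm r * (K * norm v)"
    using approx by (simp add: mult_left_mono)
  finally have "norm v * norm v \<le> (K * norm r) * norm v"
    by (simp add: ac_simps)
  then show ?thesis
    using \<open>0 \<le> K\<close> by (cases "norm v = 0") (simp_all add: mult_le_cancel_right)
qed

lemma bounded_linear_inv_into:
  fixes B :: "'a::real_normed_vector \<Rightarrow> 'b::real_normed_vector"
  assumes "subspace Y" and add: "\<And>a b. a \<in> Y \<Longrightarrow> b \<in> Y \<Longrightarrow> B (a + b) = B a + B b"
    and scale: "\<And>r a. a \<in> Y \<Longrightarrow> B (r *\<^sub>R a) = r *\<^sub>R B a"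
    and bij: "bij_betw B Y UNIV" and bound: "\<And>y. y \<in> Y \<Longrightarrow> norm y \<le> C * norm (B y)"
  shows "bounded_linear (inv_into Y B)"
proof -
  define Binv where "Binv = inv_into Y B"
  have in_Y: "Binv u \<in> Y" and right_inv: "B (Binv u) = u" for u
    using bij by (auto simp: Binv_def bij_betw_def inv_into_into f_inv_into_f)
  have left_inv: "y \<in> Y \<Longrightarrow> Binv (B y) = y" for y
    using bij by (simp add: Binv_def bij_betw_def)
  have "bounded_linear Binv"
  proof (rule bounded_linear_intro[where K = "\<bar>C\<bar>"])
    fix u w
    show "Binv (u + w) = Binv u + Binv w"
      using left_inv[of "Binv u + Binv w"] add[OF in_Y in_Y] right_inv subspace_add[OF \<open>subspace Y\<close> in_Y in_Y]
      by simp
  next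
    fix r u
    show "Binv (r *\<^sub>R u) = r *\<^sub>R Binv u"
      using left_inv[of "r *\<^sub>R Binv u"] scale[OF in_Y] right_inv subspace_scale[OF \<open>subspace Y\<close> in_Y]
      by simp
  next
    fix u
    show "norm (Binv u) \<le> norm u * \<bar>C\<bar>"
      using bound[OF in_Y, of u] right_inv[of u] abs_ge_self[of C] mult_right_mono[of C "\<bar>C\<bar>" "norm u"]
      by (simp add: mult.commute)
  qed
  then show ?thesis by (simp add: Binv_def)
qed

lemma adjoint_representation:
  fixes B :: "'y::real_inner \<Rightarrow> ('x::{real_inner,complete_space} \<Rightarrow>\<^sub>L real)"
  assumes "subspace Y" and add: "\<And>a b. a \<in> Y \<Longrightarrow> b \<in> Y \<Longrightarrow> B (a + b) = B a + B b"
    and scale: "\<And>r a. a \<in> Y \<Longrightarrow> B (r *\<^sub>R a) = r *\<^sub>R B a"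
    and bij: "bij_betw B Y UNIV" and bound: "\<And>y. y \<in> Y \<Longrightarrow> norm y \<le> C * norm (B y)"
  obtains x where "\<And>y. y \<in> Y \<Longrightarrow> B y x = inner y w"
proof -
  have "bounded_linear (inv_into Y B)"
    using assms by (rule bounded_linear_inv_into)
  then have "bounded_linear (\<lambda>z. inner (inv_into Y B (blinfun_inner_left z)) w)"
    by (intro bounded_linear_compose[OF bounded_linear_inner_left]
        bounded_linear_compose[OF _ bounded_linear_blinfun_inner_left])
  then obtain x where x: "\<And>z. inner (inv_into Y B (blinfun_inner_left z)) w = inner x z"
    by (rule riesz_representation) blast
  have "B y x = inner y w" if "y \<in> Y" for y
  proof -
    obtain z where z: "\<And>\<xi>. B y \<xi> = inner z \<xi>"
      using riesz_representation[OF blinfun.bounded_linear_right] by blast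
    have "B y = blinfun_inner_left z"
      by (rule blinfun_eqI) (simp add: z inner_commute)
    moreover have "inv_into Y B (B y) = y"
      using bij that by (simp add: bij_betw_def)
    ultimately have "inner y w = inner x z"
      using x[of z] by simp
    then show ?thesis by (simp add: z inner_commute)
  qed
  then show thesis by (rule that)
qed

lemma petrov_galerkin_error:
  fixes B :: "'y::real_inner \<Rightarrow> ('x::real_normed_vector \<Rightarrow>\<^sub>L real)"
  assumes inf_sup: "\<And>w. w \<in> U \<Longrightarrow> w \<noteq> 0 \<Longrightarrow>
      cS * norm w \<le> (SUP x \<in> X - {0}. blinfun_apply w x / norm x)"
    and "0 < cS" and U: "\<exists>A. finite A \<and> span A = U" "dim U = dim X"
    and adjoint: "\<And>w. \<exists>x. \<forall>y\<in>Y. B y x = inner y w"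
    and Q: "\<And>x. Q x \<in> X" "\<And>x z. \<forall>y\<in>Y. B y x = inner y z \<Longrightarrow> norm (x - Q x) \<le> K * norm z"
    and "0 \<le> K"
    and u: "u \<in> U" "\<forall>x \<in> X. blinfun_apply u x = blinfun_apply (B yr) x"
    and yt: "yt \<in> Y" "B yt = u" and "yr \<in> Y"
  shows "norm (yt - yr) \<le> K * (1 / cS + 1) * norm (B yr)"
proof -
  obtain x where dual: "\<forall>y\<in>Y. B y x = inner y (yt - yr)"
    using adjoint by blast
  have "cS * norm u \<le> norm (B yr)"
  proof (cases "u = 0")
    case False
    \<comment> \<open>the supremum in the inf-sup condition is unspecified over an empty index set\<close>
    obtain A where "finite A" "span A = U" using U(1) by blast
    then show ?thesis
      using inf_sup[OF u(1) False] ex_nonzero_if_dim_eq[OF _ _ U(2) u(1) False]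
      by (intro inf_sup_norm_le) (use u(2) in auto)
  qed simp
  then have "norm u \<le> norm (B yr) / cS"
    using \<open>0 < cS\<close> by (simp add: field_simps mult.commute)
  then have "norm (u - B yr) \<le> (1 / cS + 1) * norm (B yr)"
    using norm_triangle_ineq4[of u "B yr"] by (simp add: algebra_simps)
  moreover have "norm (yt - yr) \<le> K * norm (u - B yr)"
  proof (rule norm_le_by_orthogonal_residual[OF _ Q(1) _ Q(2)[OF dual] \<open>0 \<le> K\<close>])
    have "B yt x = inner yt (yt - yr)" "B yr x = inner yr (yt - yr)"
      using dual yt(1) \<open>yr \<in> Y\<close> by auto
    with yt(2) show "(u - B yr) x = inner (yt - yr) (yt - yr)"
      by (simp add: blinfun.diff_left inner_diff_left)
    show "\<And>x'. x' \<in> X \<Longrightarrow> (u - B yr) x' = 0"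
      using u(2) by (simp add: blinfun.diff_left)
  qed
  ultimately show ?thesis
    using \<open>0 \<le> K\<close> by (metis mult.assoc mult_left_mono order_trans)
qed

section \<open>The K-functional\<close>

context
  fixes Y :: "'y::real_normed_vector set" and nY :: "'y \<Rightarrow> real"
  assumes zero_in_Y: "0 \<in> Y" and nY_nonneg: "\<And>y. y \<in> Y \<Longrightarrow> 0 \<le> nY y"
begin

lemma Kfun_le:
  assumes "0 \<le> t" "y1 \<in> Y" "y = y0 + y1"
  shows "Kfun Y nY t y \<le> norm y0 + t * nY y1"
  unfolding Kfun_def
proof (rule cInf_lower)
  show "bdd_below {norm y0 + t * nY y1 | y0 y1. y1 \<in> Y \<and> y = y0 + y1}"
    using \<open>0 \<le> t\<close> nY_nonneg by (intro bdd_belowI[where m = 0]) auto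
qed (use assms in blast)

lemma Kfun_greatest:
  assumes "\<And>y0 y1. y1 \<in> Y \<Longrightarrow> y = y0 + y1 \<Longrightarrow> e \<le> norm y0 + t * nY y1"
  shows "e \<le> Kfun Y nY t y"
  unfolding Kfun_def by (rule cInf_greatest) (use assms zero_in_Y in fastforce)+

lemma Kfun_nonneg: "0 \<le> t \<Longrightarrow> 0 \<le> Kfun Y nY t y"
  by (rule Kfun_greatest) (simp add: nY_nonneg)

lemma Kfun_mono:
  assumes "0 \<le> t" "t \<le> t'"
  shows "Kfun Y nY t y \<le> Kfun Y nY t' y"
proof (rule Kfun_greatest)
  fix y0 y1 assume "y1 \<in> Y" "y = y0 + y1"
  then have "Kfun Y nY t y \<le> norm y0 + t * nY y1" using assms by (intro Kfun_le) simp_all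
  also have "\<dots> \<le> norm y0 + t' * nY y1" using assms nY_nonneg[OF \<open>y1 \<in> Y\<close>] by (simp add: mult_right_mono)
  finally show "Kfun Y nY t y \<le> norm y0 + t' * nY y1" .
qed

lemma Kfun_le_interp_norm_open:
  assumes "0 < s" "s < 1" "0 < T" and finite: "interp_integral s Y nY y < \<infinity>"
  shows "Kfun Y nY T y \<le> 3 * T powr s * interp_norm s Y nY y"
proof -
  \<comment> \<open>\<open>Kfun\<close> is nondecreasing in \<open>t\<close>, so the part of the integral over \<open>[T, 2T]\<close> alone
    is at least \<open>((2 * T) powr -s * Kfun Y nY T y)\<^sup>2 / 2\<close>\<close>
  define k where "k = Kfun Y nY T y"
  define P where "P = (2 * T) powr (- s)"
  define c where "c = (P * k)\<^sup>2 / (2 * T)"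
  have "0 \<le> k" "0 \<le> c" unfolding k_def c_def using Kfun_nonneg \<open>0 < T\<close> by simp_all
  have "ennreal c * indicator {T..2*T} t
      \<le> ennreal ((t powr (- s) * Kfun Y nY t y)\<^sup>2 / t) * indicator {0<..} t" for t
  proof (cases "t \<in> {T..2*T}")
    case True
    then have t: "T \<le> t" "t \<le> 2 * T" "0 < t" using \<open>0 < T\<close> by auto
    have "P * k \<le> t powr (- s) * Kfun Y nY t y"
      unfolding P_def k_def using t \<open>0 < s\<close> \<open>0 \<le> k\<close>[unfolded k_def] Kfun_mono[of T t]
      by (intro mult_mono powr_mono2') auto
    then have "(P * k)\<^sup>2 \<le> (t powr (- s) * Kfun Y nY t y)\<^sup>2"
      using \<open>0 \<le> k\<close> by (intro power_mono) (simp_all add: P_def)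
    then have "c \<le> (t powr (- s) * Kfun Y nY t y)\<^sup>2 / t"
      unfolding c_def using t by (intro frac_le) auto
    then show ?thesis using True t by (simp add: ennreal_leI)
  qed simp
  then have "(\<integral>\<^sup>+ t. ennreal c * indicator {T..2*T} t \<partial>lborel) \<le> interp_integral s Y nY y"
    unfolding interp_integral_def by (intro nn_integral_mono) simp
  then have integral_ge: "ennreal (c * T) \<le> interp_integral s Y nY y"
    using \<open>0 < T\<close> \<open>0 \<le> c\<close> by (simp add: nn_integral_cmult_indicator ennreal_mult)
  define N where "N = interp_norm s Y nY y"
  have N: "N = sqrt (enn2real (interp_integral s Y nY y))"
    using \<open>0 < s\<close> \<open>s < 1\<close> by (simp add: N_def interp_norm_def)
  have "c * T \<le> N\<^sup>2"
    using enn2real_mono[OF integral_ge finite[unfolded infinity_ennreal_def]] \<open>0 \<le> c\<close> \<open>0 < T\<close>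
    by (simp add: N)
  moreover have "c * T = (P * k)\<^sup>2 / 2"
    unfolding c_def using \<open>0 < T\<close> by (simp add: field_simps power2_eq_square)
  ultimately have "(P * k)\<^sup>2 \<le> (sqrt 2 * N)\<^sup>2"
    by (simp add: power_mult_distrib)
  then have "P * k \<le> sqrt 2 * N"
    by (rule power2_le_imp_le) (simp add: N)
  also have "\<dots> \<le> (3/2) * N"
    by (intro mult_right_mono real_le_lsqrt) (simp_all add: N power2_eq_square)
  finally have Pk: "P * k \<le> (3/2) * N" .
  have "k = (2 * T) powr s * (P * k)"
    unfolding P_def using \<open>0 < T\<close> by (simp add: powr_minus field_simps)
  also have "\<dots> \<le> (2 * T powr s) * ((3/2) * N)"
  proof (rule mult_mono[OF _ Pk])
    have "(2::real) powr s \<le> 2 powr 1" using \<open>s < 1\<close> by (intro powr_mono) auto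
    then show "(2 * T) powr s \<le> 2 * T powr s" using \<open>0 < T\<close> by (simp add: powr_mult)
  qed (simp_all add: P_def \<open>0 \<le> k\<close>)
  finally show ?thesis by (simp add: k_def N_def)
qed

lemma Kfun_le_interp_norm:
  assumes "0 \<le> s" "s \<le> 1" "0 < T" "nY 0 = 0" "y \<in> interp_space s Y nY"
  shows "Kfun Y nY T y \<le> 3 * T powr s * interp_norm s Y nY y"
proof -
  consider "s = 0" | "s = 1" | "0 < s" "s < 1" using assms by linarith
  then show ?thesis
  proof cases
    case 1
    have "Kfun Y nY T y \<le> norm y"
      using Kfun_le[of T 0 y y] assms zero_in_Y by simp
    also have "\<dots> \<le> 3 * T powr s * interp_norm s Y nY y"
      using 1 \<open>0 < T\<close> by (simp add: interp_norm_def)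
    finally show ?thesis .
  next
    case 2
    then have "y \<in> Y" using assms by (simp add: interp_space_def)
    then have "Kfun Y nY T y \<le> T * nY y"
      using Kfun_le[of T y y 0] assms by simp
    also have "\<dots> \<le> 3 * T powr s * interp_norm s Y nY y"
      using 2 \<open>0 < T\<close> nY_nonneg[OF \<open>y \<in> Y\<close>] by (simp add: interp_norm_def)
    finally show ?thesis .
  next
    case 3
    then show ?thesis
      using assms by (intro Kfun_le_interp_norm_open) (simp_all add: interp_space_def)
  qed
qed

lemma le_interp_norm_if_le_decompositions:
  assumes "0 \<le> s" "s \<le> 1" "0 < T" "nY 0 = 0" "y \<in> interp_space s Y nY" "0 < C"
    and bound: "\<And>y0 y1. y1 \<in> Y \<Longrightarrow> y = y0 + y1 \<Longrightarrow> e \<le> C * (norm y0 + T * nY y1)"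
  shows "e \<le> 3 * C * T powr s * interp_norm s Y nY y"
proof -
  have "e / C \<le> Kfun Y nY T y"
    using bound \<open>0 < C\<close> by (intro Kfun_greatest) (simp add: divide_le_eq mult.commute)
  also have "\<dots> \<le> 3 * T powr s * interp_norm s Y nY y"
    using assms by (intro Kfun_le_interp_norm)
  finally show ?thesis
    using \<open>0 < C\<close> by (simp add: divide_le_eq ac_simps)
qed

end

theorem mainTheorem6:
  fixes Ysp :: "('y::{real_inner, complete_space}) set"
    and d :: "'y \<Rightarrow> 'y \<Rightarrow> real"
    and Bop :: "'y \<Rightarrow> ('x::{real_inner, complete_space} \<Rightarrow>\<^sub>L real)"
    and Yh :: "real \<Rightarrow> 'y set" and Ph :: "real \<Rightarrow> 'y \<Rightarrow> 'y"
    and Uh :: "real \<Rightarrow> ('x \<Rightarrow>\<^sub>L real) set" and Xh :: "real \<Rightarrow> 'x set"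
    and Pih :: "real \<Rightarrow> 'x \<Rightarrow> 'x"
    and h0 \<alpha> c1 c2 cS cPi CE CB CB' s :: real
  assumes
    \<comment> \<open>Y: dense subspace of the Hilbert space H_Y, Hilbert w.r.t. the D-inner product\<close>
    Y_subspace: "subspace Ysp"
    and Y_dense: "closure Ysp = UNIV"
    and d_add: "\<And>a b z. a \<in> Ysp \<Longrightarrow> b \<in> Ysp \<Longrightarrow> z \<in> Ysp \<Longrightarrow> d (a + b) z = d a z + d b z"
    and d_scale: "\<And>r a z. a \<in> Ysp \<Longrightarrow> z \<in> Ysp \<Longrightarrow> d (r *\<^sub>R a) z = r * d a z"
    and d_sym: "\<And>a z. a \<in> Ysp \<Longrightarrow> z \<in> Ysp \<Longrightarrow> d a z = d z a"
    and d_pos: "\<And>a. a \<in> Ysp \<Longrightarrow> a \<noteq> 0 \<Longrightarrow> d a a > 0"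
    and Y_complete: "\<And>f. (\<forall>n. f n \<in> Ysp) \<Longrightarrow>
        (\<forall>e>0. \<exists>N. \<forall>m\<ge>N. \<forall>n\<ge>N. Dnorm d (f m - f n) < e) \<Longrightarrow>
        (\<exists>l\<in>Ysp. (\<lambda>n. Dnorm d (f n - l)) \<longlonglongrightarrow> 0)"
    and CE_pos: "CE > 0"
    and Y_embed: "\<And>y. y \<in> Ysp \<Longrightarrow> norm y \<le> CE * Dnorm d y"
    \<comment> \<open>B : Y \<rightarrow> X^* bounded linear isomorphism\<close>
    and B_add: "\<And>a b. a \<in> Ysp \<Longrightarrow> b \<in> Ysp \<Longrightarrow> Bop (a + b) = Bop a + Bop b"
    and B_scale: "\<And>r a. a \<in> Ysp \<Longrightarrow> Bop (r *\<^sub>R a) = r *\<^sub>R Bop a"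
    and B_bij: "bij_betw Bop Ysp UNIV"
    and CB_pos: "CB > 0" and CB'_pos: "CB' > 0"
    and B_bound: "\<And>y. y \<in> Ysp \<Longrightarrow> norm (Bop y) \<le> CB * Dnorm d y"
    and B_inv_bound: "\<And>y. y \<in> Ysp \<Longrightarrow> Dnorm d y \<le> CB' * norm (Bop y)"
    \<comment> \<open>discretization parameters\<close>
    and h0_pos: "h0 > 0" and alpha_pos: "\<alpha> > 0"
    and c1_pos: "c1 > 0" and c2_pos: "c2 > 0" and cS_pos: "cS > 0" and cPi_pos: "cPi > 0"
    and Yh_sub: "\<And>h. h \<in> {0<..h0} \<Longrightarrow> subspace (Yh h) \<and> Yh h \<subseteq> Ysp \<and>
                     (\<exists>A. finite A \<and> span A = Yh h)"
    and Ph_map: "\<And>h y. h \<in> {0<..h0} \<Longrightarrow> y \<in> Ysp \<Longrightarrow> Ph h y \<in> Yh h"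
    and Ph_H: "\<And>h y. h \<in> {0<..h0} \<Longrightarrow> y \<in> Ysp \<Longrightarrow>
                 norm (y - Ph h y) \<le> c1 * h powr \<alpha> * Dnorm d y"
    and Ph_D: "\<And>h y. h \<in> {0<..h0} \<Longrightarrow> y \<in> Ysp \<Longrightarrow>
                 Dnorm d (y - Ph h y) \<le> c2 * Dnorm d y"
    and Uh_sub: "\<And>h. h \<in> {0<..h0} \<Longrightarrow> subspace (Uh h) \<and> (\<exists>A. finite A \<and> span A = Uh h)"
    and Xh_sub: "\<And>h. h \<in> {0<..h0} \<Longrightarrow> subspace (Xh h) \<and> (\<exists>A. finite A \<and> span A = Xh h)"
    and dim_eq: "\<And>h. h \<in> {0<..h0} \<Longrightarrow> dim (Uh h) = dim (Xh h)"
    and inf_sup: "\<And>h u. h \<in> {0<..h0} \<Longrightarrow> u \<in> Uh h \<Longrightarrow> u \<noteq> 0 \<Longrightarrow>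
        cS * norm u \<le> (SUP x \<in> Xh h - {0}. blinfun_apply u x / norm x)"
    and Pih_map: "\<And>h x. h \<in> {0<..h0} \<Longrightarrow> Pih h x \<in> Xh h"
    and Pih_approx: "\<And>h x z. h \<in> {0<..h0} \<Longrightarrow>
        (\<forall>y\<in>Ysp. blinfun_apply (Bop y) x = inner y z) \<Longrightarrow>
        norm (x - Pih h x) \<le> cPi * h powr \<alpha> * norm z"
    \<comment> \<open>interpolation exponent\<close>
    and s_range: "0 \<le> s" "s \<le> 1"
  shows "\<exists>c. \<forall>h \<in> {0<..h0}. \<forall>ybar \<in> interp_space s Ysp (Dnorm d).
           \<forall>yrh ut yt.
             (yrh \<in> Yh h \<and>
              (\<forall>z \<in> Yh h. inner yrh z + h powr (2 * \<alpha>) * d yrh z = inner ybar z)) \<longrightarrow>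
             (ut \<in> Uh h \<and> (\<forall>xh \<in> Xh h. blinfun_apply ut xh = blinfun_apply (Bop yrh) xh)) \<longrightarrow>
             (yt \<in> Ysp \<and> Bop yt = ut) \<longrightarrow>
             norm (yt - ybar) \<le> c * h powr (\<alpha> * s) * interp_norm s Ysp (Dnorm d) ybar"
proof -
  have form: "energy_form Ysp d"
    using Y_subspace d_add d_scale d_sym d_pos by unfold_locales
  have "norm y \<le> CE * CB' * norm (Bop y)" if "y \<in> Ysp" for y
    using order_trans[OF Y_embed[OF that] mult_left_mono[OF B_inv_bound[OF that]]] CE_pos
    by (simp add: mult.assoc)
  then have adjoint: "\<exists>x. \<forall>y\<in>Ysp. Bop y x = inner y w" for w
    by (metis adjoint_representation[OF Y_subspace B_add B_scale B_bij])
  define Cpg K where "Cpg = cPi * (1 / cS + 1) * CB" and "K = 2 * (1 + c1 + c2)"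
  have "0 \<le> Cpg" "0 < K"
    using cPi_pos cS_pos CB_pos c1_pos c2_pos by (simp_all add: Cpg_def K_def)
  show ?thesis
  proof (intro exI[of _ "3 * ((Cpg + 1) * K)"] ballI allI impI)
    fix h ybar yrh ut yt
    assume h: "h \<in> {0<..h0}" and ybar: "ybar \<in> interp_space s Ysp (Dnorm d)"
      and yrh: "yrh \<in> Yh h \<and> (\<forall>z \<in> Yh h. inner yrh z + h powr (2 * \<alpha>) * d yrh z = inner ybar z)"
      and ut: "ut \<in> Uh h \<and> (\<forall>xh \<in> Xh h. blinfun_apply ut xh = blinfun_apply (Bop yrh) xh)"
      and yt: "yt \<in> Ysp \<and> Bop yt = ut"
    define t where "t = h powr \<alpha>"
    have "0 < t" and rho: "h powr (2 * \<alpha>) = t\<^sup>2"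
      using h by (simp_all add: t_def power2_eq_square flip: powr_add)
    have yrh_in: "yrh \<in> Ysp"
      using yrh Yh_sub[OF h] by blast
    have "norm (yt - yrh) \<le> cPi * t * (1 / cS + 1) * norm (Bop yrh)"
      unfolding t_def
      by (rule petrov_galerkin_error[OF inf_sup[OF h] cS_pos _ dim_eq[OF h] adjoint Pih_map[OF h] Pih_approx[OF h]])
        (use Uh_sub[OF h] ut yt yrh_in cPi_pos in auto)
    also have "\<dots> \<le> Cpg * (t * Dnorm d yrh)"
      using mult_left_mono[OF B_bound[OF yrh_in], of "cPi * t * (1 / cS + 1)"] cPi_pos cS_pos \<open>0 < t\<close>
      by (simp add: Cpg_def ac_simps)
    finally have pg: "norm (yt - yrh) \<le> Cpg * (t * Dnorm d yrh)" .
    have "norm (yt - ybar) \<le> (Cpg + 1) * K * (norm y0 + t * Dnorm d y1)"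
      if "y1 \<in> Ysp" "ybar = y0 + y1" for y0 y1
      using galerkin_perturbation_error[OF form _ _ \<open>0 < t\<close> _ _ _ _ Ph_map[OF h] _ _ pg \<open>0 \<le> Cpg\<close> that]
        Yh_sub[OF h] yrh rho Ph_H[OF h] Ph_D[OF h] c1_pos c2_pos
      by (simp add: K_def t_def)
    then have "norm (yt - ybar) \<le> 3 * ((Cpg + 1) * K) * t powr s * interp_norm s Ysp (Dnorm d) ybar"
      using s_range \<open>0 < t\<close> ybar \<open>0 \<le> Cpg\<close> \<open>0 < K\<close>
      by (intro le_interp_norm_if_le_decompositions energy_form.zero_in[OF form])
        (simp_all add: energy_form.Dnorm_nonneg[OF form] energy_form.Dnorm_zero[OF form])
    then show "norm (yt - ybar) \<le> 3 * ((Cpg + 1) * K) * h powr (\<alpha> * s) * interp_norm s Ysp (Dnorm d) ybar"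
      by (simp add: t_def powr_powr)
  qed
qed

end
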